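(* Let $\mathbb F$ be a field of characteristic $2$, $S=\{R_0,\dots,R_d\}$ a quasi-thin scheme on $X$, $x\in X$, $\mathcal T=\mathcal T(x)$, $E_a^*=E_a^*(x)$, and $\mathcal J_1=\langle\{E_a^*JE_b^*:R_a,R_b\in S,\ \max\{k_a,k_b\}=2\}\rangle_{\mathbb F}$. Then: (i) $MN,NM\in\mathcal J_1$ for all $M\in\mathcal T$ and $N\in\mathcal J_1$; (ii) $N^3=O$ for every $N\in\mathcal J_1$; (iii) $\mathcal J_1$ is a two-sided nilpotent ideal of $\mathcal T$, and in particular $\mathcal J_1$ is contained in the Jacobson radical of $\mathcal T$.
   Context: Let $X$ be a nonempty finite set. A scheme of class $d$ on $X$ is a partition $S=\{R_0,\dots,R_d\}$ of $X\times X$ into nonempty sets such that $R_0=\{(b,b):b\in X\}$; for each $c$ there is $c'$ with $R_{c'}=\{(f,e):(e,f)\in R_c\}$; and for all $i,j,k$ the intersection number $p_{ij}^k=|\{\ell\in X:(m,\ell)\in R_i,(\ell,n)\in R_j\}|$ does not depend on $(m,n)\in R_k$. The valency is $k_a=p_{aa'}^0$; quasi-thin means all $k_a\le 2$. For $y\in X$, $yR_a=\{z:(y,z)\in R_a\}$; $A_a\in M_X(\mathbb F)$ is the $(0,1)$ adjacency matrix of $R_a$, $E_a^*(y)$ is the diagonal $(0,1)$-matrix with ones exactly at positions indexed by $yR_a$, $J$ the all-ones matrix, $O$ the zero matrix; $\mathcal T(y)$ is the $\mathbb F$-subalgebra of $M_X(\mathbb F)$ generated by $A_0,\dots,A_d,E_0^*(y),\dots,E_d^*(y)$.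 $\langle Y\rangle_{\mathbb F}$ is the $\mathbb F$-span (zero space if $Y=\varnothing$). *)

theory Defs
  imports "HOL-Analysis.Analysis"
begin

text \<open>The finite set X is the universe of a finite type 'x; a scheme of class d is
  a map R from indices 0..d to relations on 'x.\<close>

definition is_scheme :: "nat \<Rightarrow> (nat \<Rightarrow> ('x::finite \<times> 'x) set) \<Rightarrow> bool" where
  "is_scheme d R \<longleftrightarrow>
     (\<forall>i\<le>d. R i \<noteq> {}) \<and>
     (\<forall>i\<le>d. \<forall>j\<le>d. i \<noteq> j \<longrightarrow> R i \<inter> R j = {}) \<and>
     (\<Union>i\<in>{0..d}. R i) = UNIV \<and>
     R 0 = {(b, b) | b. True} \<and>
     (\<forall>c\<le>d. \<exists>c'\<le>d. R c' = {(f, e). (e, f) \<in> R c}) \<and>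
     (\<forall>i\<le>d. \<forall>j\<le>d. \<forall>k\<le>d. \<exists>p. \<forall>(m, n)\<in>R k.
         card {l. (m, l) \<in> R i \<and> (l, n) \<in> R j} = p)"

definition int_num :: "(nat \<Rightarrow> ('x::finite \<times> 'x) set) \<Rightarrow> nat \<Rightarrow> nat \<Rightarrow> nat \<Rightarrow> nat" where
  "int_num R i j k = (SOME p. \<forall>(m, n)\<in>R k. card {l. (m, l) \<in> R i \<and> (l, n) \<in> R j} = p)"

definition conv_idx :: "nat \<Rightarrow> (nat \<Rightarrow> ('x::finite \<times> 'x) set) \<Rightarrow> nat \<Rightarrow> nat" where
  "conv_idx d R c = (SOME c'. c' \<le> d \<and> R c' = {(f, e). (e, f) \<in> R c})"

definition valency :: "nat \<Rightarrow> (nat \<Rightarrow> ('x::finite \<times> 'x) set) \<Rightarrow> nat \<Rightarrow> nat" where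
  "valency d R a = int_num R a (conv_idx d R a) 0"

definition quasi_thin :: "nat \<Rightarrow> (nat \<Rightarrow> ('x::finite \<times> 'x) set) \<Rightarrow> bool" where
  "quasi_thin d R \<longleftrightarrow> (\<forall>a\<le>d. valency d R a \<le> 2)"

text \<open>Matrices in M_X(F) are 'a ^ 'x ^ 'x.\<close>

definition adj_mat :: "('x::finite \<times> 'x) set \<Rightarrow> 'a::field ^ 'x ^ 'x" where
  "adj_mat S = (\<chi> i j. if (i, j) \<in> S then 1 else 0)"

definition dual_idem :: "(nat \<Rightarrow> ('x::finite \<times> 'x) set) \<Rightarrow> 'x \<Rightarrow> nat \<Rightarrow> 'a::field ^ 'x ^ 'x" where
  "dual_idem R y a = (\<chi> i j. if i = j \<and> (y, i) \<in> R a then 1 else 0)"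

definition all_ones :: "'a::field ^ 'x::finite ^ 'x" where
  "all_ones = (\<chi> i j. 1)"

definition smat :: "'a::field \<Rightarrow> 'a ^ 'x::finite ^ 'x \<Rightarrow> 'a ^ 'x ^ 'x" where
  "smat c M = (\<chi> i j. c * M $ i $ j)"

inductive_set gen_alg :: "('a::field ^ 'x::finite ^ 'x) set \<Rightarrow> ('a ^ 'x ^ 'x) set"
  for G where
  gen: "M \<in> G \<Longrightarrow> M \<in> gen_alg G"
| zero: "0 \<in> gen_alg G"
| add: "M \<in> gen_alg G \<Longrightarrow> N \<in> gen_alg G \<Longrightarrow> M + N \<in> gen_alg G"
| smul: "M \<in> gen_alg G \<Longrightarrow> smat c M \<in> gen_alg G"
| mult: "M \<in> gen_alg G \<Longrightarrow> N \<in> gen_alg G \<Longrightarrow> M ** N \<in> gen_alg G"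

definition terwilliger :: "nat \<Rightarrow> (nat \<Rightarrow> ('x::finite \<times> 'x) set) \<Rightarrow> 'x \<Rightarrow> ('a::field ^ 'x ^ 'x) set" where
  "terwilliger d R y = gen_alg ((\<lambda>a. adj_mat (R a)) ` {0..d} \<union> dual_idem R y ` {0..d})"

definition mat_span :: "('a::field ^ 'x::finite ^ 'x) set \<Rightarrow> ('a ^ 'x ^ 'x) set" where
  "mat_span Y = {M. \<exists>c. M = (\<Sum>B\<in>Y. smat (c B) B)}"

definition J1 :: "nat \<Rightarrow> (nat \<Rightarrow> ('x::finite \<times> 'x) set) \<Rightarrow> 'x \<Rightarrow> ('a::field ^ 'x ^ 'x) set" where
  "J1 d R y = mat_span {dual_idem R y a ** all_ones ** dual_idem R y b | a b.
                 a \<le> d \<and> b \<le> d \<and> max (valency d R a) (valency d R b) = 2}"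

definition is_subspace_in :: "('a::field ^ 'x::finite ^ 'x) set \<Rightarrow> ('a ^ 'x ^ 'x) set \<Rightarrow> bool" where
  "is_subspace_in T I \<longleftrightarrow> I \<subseteq> T \<and> 0 \<in> I \<and> (\<forall>M\<in>I. \<forall>N\<in>I. M + N \<in> I) \<and>
     (\<forall>c. \<forall>M\<in>I. smat c M \<in> I)"

definition left_ideal :: "('a::field ^ 'x::finite ^ 'x) set \<Rightarrow> ('a ^ 'x ^ 'x) set \<Rightarrow> bool" where
  "left_ideal T I \<longleftrightarrow> is_subspace_in T I \<and> (\<forall>M\<in>T. \<forall>N\<in>I. M ** N \<in> I)"

definition two_sided_ideal :: "('a::field ^ 'x::finite ^ 'x) set \<Rightarrow> ('a ^ 'x ^ 'x) set \<Rightarrow> bool" where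
  "two_sided_ideal T I \<longleftrightarrow> is_subspace_in T I \<and> (\<forall>M\<in>T. \<forall>N\<in>I. M ** N \<in> I \<and> N ** M \<in> I)"

definition nilpotent_ideal :: "('a::field ^ 'x::finite ^ 'x) set \<Rightarrow> bool" where
  "nilpotent_ideal I \<longleftrightarrow> (\<exists>n\<ge>1. \<forall>Ns. length Ns = n \<longrightarrow> set Ns \<subseteq> I \<longrightarrow>
        foldr (\<lambda>A B. A ** B) Ns (mat 1) = 0)"

definition maximal_left_ideal :: "('a::field ^ 'x::finite ^ 'x) set \<Rightarrow> ('a ^ 'x ^ 'x) set \<Rightarrow> bool" where
  "maximal_left_ideal T L \<longleftrightarrow> left_ideal T L \<and> L \<noteq> T \<and>
     (\<forall>L'. left_ideal T L' \<and> L \<subseteq> L' \<longrightarrow> L' = L \<or> L' = T)"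

definition jacobson_radical :: "('a::field ^ 'x::finite ^ 'x) set \<Rightarrow> ('a ^ 'x ^ 'x) set" where
  "jacobson_radical T = T \<inter> \<Inter>{L. maximal_left_ideal T L}"

end

theory Submission
  imports Defs
begin

(* Write r(i) for the index of the relation containing (x, i). The generators E_a^* J E_b^*
  of J1 are the indicator matrices of the blocks xR_a \<times> xR_b, so J1 consists of the matrices
  that are constant on blocks and vanish on all blocks between thin points, the points i with
  xR_r(i) = {i}. In a quasi-thin scheme every other set xR_a has exactly two points, so in
  characteristic 2 a product of block-constant matrices only sees the thin points; this gives
  N1 N2 N3 = O on J1. Left multiplication by A_c keeps a matrix constant on blocks because
  |iR_c \<inter> xR_a| = p^r(i)_{a c'} depends only on r(i); for a thin point i this number is
  0 or |xR_a|, hence even when |xR_a| = 2, so vanishing on thin blocks is preserved too. Right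
  multiplication follows by transposition. Finally a nil left ideal lies in every maximal left
  ideal L: if 1 = l + n with l in L and n^3 = O, then (1 + n + n^2) l = 1. *)

section \<open>Schemes and subconstituents\<close>

lemma
  assumes "is_scheme d R"
  shows scheme_covers: "(\<Union>i\<in>{0..d}. R i) = UNIV"
    and scheme_disjoint: "\<lbrakk>i \<le> d; j \<le> d; i \<noteq> j\<rbrakk> \<Longrightarrow> R i \<inter> R j = {}"
    and scheme_diagonal: "R 0 = {(b, b) | b. True}"
    and scheme_converse: "c \<le> d \<Longrightarrow> \<exists>c'\<le>d. R c' = {(f, e). (e, f) \<in> R c}"
    and scheme_regular: "\<lbrakk>i \<le> d; j \<le> d; k \<le> d\<rbrakk> \<Longrightarrow>
           \<exists>p. \<forall>(m, n)\<in>R k. card {l. (m, l) \<in> R i \<and> (l, n) \<in> R j} = p"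
proof -
  note S = assms[unfolded is_scheme_def]
  show "(\<Union>i\<in>{0..d}. R i) = UNIV" "R 0 = {(b, b) | b. True}" using S by simp_all
  show "R i \<inter> R j = {}" if "i \<le> d" "j \<le> d" "i \<noteq> j" for i j using S that by simp
  show "\<exists>c'\<le>d. R c' = {(f, e). (e, f) \<in> R c}" if "c \<le> d" for c using S that by simp
  show "\<exists>p. \<forall>(m, n)\<in>R k. card {l. (m, l) \<in> R i \<and> (l, n) \<in> R j} = p"
    if "i \<le> d" "j \<le> d" "k \<le> d" for i j k using S that by simp
qed

lemma intersection_card_eq:
  assumes "is_scheme d R" "i \<le> d" "j \<le> d" "k \<le> d" "(m, n) \<in> R k" "(m', n') \<in> R k"
  shows "card {l. (m, l) \<in> R i \<and> (l, n) \<in> R j} = card {l. (m', l) \<in> R i \<and> (l, n') \<in> R j}"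
proof -
  obtain p where "\<forall>(m, n)\<in>R k. card {l. (m, l) \<in> R i \<and> (l, n) \<in> R j} = p"
    using scheme_regular[OF assms(1-4)] by blast
  then have "card {l. (m, l) \<in> R i \<and> (l, n) \<in> R j} = p"
    and "card {l. (m', l) \<in> R i \<and> (l, n') \<in> R j} = p"
    using assms(5,6) by (fast, fast)
  then show ?thesis by simp
qed

lemma valency_eq_card:
  assumes sch: "is_scheme d R" and a: "a \<le> d"
  shows "valency d R a = card {l. (x, l) \<in> R a}"
proof -
  define a' where "a' = conv_idx d R a"
  have "\<exists>c'. c' \<le> d \<and> R c' = {(f, e). (e, f) \<in> R a}"
    using scheme_converse[OF sch a] by blast
  then have a': "a' \<le> d \<and> R a' = {(f, e). (e, f) \<in> R a}"
    unfolding a'_def conv_idx_def by (rule someI_ex)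
  have "\<exists>p. \<forall>(m, n)\<in>R 0. card {l. (m, l) \<in> R a \<and> (l, n) \<in> R a'} = p"
    using scheme_regular[OF sch a] a' by blast
  then have "\<forall>(m, n)\<in>R 0. card {l. (m, l) \<in> R a \<and> (l, n) \<in> R a'} = int_num R a a' 0"
    unfolding int_num_def by (rule someI_ex)
  moreover have "(x, x) \<in> R 0" using scheme_diagonal[OF sch] by auto
  ultimately have "card {l. (x, l) \<in> R a \<and> (l, x) \<in> R a'} = int_num R a a' 0" by auto
  moreover have "{l. (x, l) \<in> R a \<and> (l, x) \<in> R a'} = {l. (x, l) \<in> R a}" using a' by auto
  ultimately show ?thesis unfolding valency_def a'_def by simp
qed

lemma card_subconstituent_le_2:
  assumes "is_scheme d R" "quasi_thin d R" "a \<le> d"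
  shows "card {l. (x, l) \<in> R a} \<le> 2"
  using assms valency_eq_card unfolding quasi_thin_def by metis

definition rel_index :: "nat \<Rightarrow> (nat \<Rightarrow> ('x::finite \<times> 'x) set) \<Rightarrow> 'x \<Rightarrow> 'x \<Rightarrow> nat" where
  "rel_index d R x i = (SOME a. a \<le> d \<and> (x, i) \<in> R a)"

lemma
  assumes "is_scheme d R"
  shows rel_index_le: "rel_index d R x i \<le> d"
    and rel_index_mem: "(x, i) \<in> R (rel_index d R x i)"
proof -
  have "(x, i) \<in> (\<Union>a\<in>{0..d}. R a)" using scheme_covers[OF assms] by simp
  then have "\<exists>a. a \<le> d \<and> (x, i) \<in> R a" by auto
  then have "rel_index d R x i \<le> d \<and> (x, i) \<in> R (rel_index d R x i)"
    unfolding rel_index_def by (rule someI_ex)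
  then show "rel_index d R x i \<le> d" "(x, i) \<in> R (rel_index d R x i)" by auto
qed

lemma mem_rel_iff_rel_index_eq:
  assumes "is_scheme d R" "a \<le> d"
  shows "(x, i) \<in> R a \<longleftrightarrow> rel_index d R x i = a"
  using rel_index_le[OF assms(1)] rel_index_mem[OF assms(1)] scheme_disjoint[OF assms(1)] assms(2)
  by blast

lemma sum_by_rel_index:
  assumes "is_scheme d R"
  shows "(\<Sum>l\<in>L. f (rel_index d R x l)) =
           (\<Sum>a=0..d. of_nat (card {l\<in>L. rel_index d R x l = a}) * (f a :: 'a::comm_semiring_1))"
proof -
  have "(\<Sum>l\<in>L. f (rel_index d R x l)) =
          (\<Sum>a\<in>{0..d}. \<Sum>l\<in>{l\<in>L. rel_index d R x l = a}. f (rel_index d R x l))"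
    by (rule sum.group[symmetric]) (use rel_index_le[OF assms] in auto)
  also have "\<dots> = (\<Sum>a=0..d. of_nat (card {l\<in>L. rel_index d R x l = a}) * f a)"
    by (intro sum.cong refl) simp
  finally show ?thesis .
qed

lemma of_nat_even_char_2:
  assumes "CHAR('a::semiring_1) = 2" "even n"
  shows "(of_nat n :: 'a) = 0"
  using assms of_nat_eq_0_iff_char_dvd[of n, where 'a='a] by simp

lemma sum_by_rel_index_even_char_2:
  assumes "is_scheme d R" "CHAR('a::comm_semiring_1) = 2"
    and "\<And>a. a \<le> d \<Longrightarrow> even (card {l\<in>L. rel_index d R x l = a})"
  shows "(\<Sum>l\<in>L. f (rel_index d R x l)) = (0::'a)"
  unfolding sum_by_rel_index[OF assms(1)]
  by (intro sum.neutral) (auto simp: of_nat_even_char_2[OF assms(2,3)])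

lemma matrix_eqI: "(\<And>i j. M $ i $ j = N $ i $ j) \<Longrightarrow> M = (N :: 'a ^ 'n ^ 'm)"
  by (simp add: vec_eq_iff)

lemma matrix_mult_nth: "(M ** N) $ i $ j = (\<Sum>l\<in>UNIV. M $ i $ l * N $ l $ j)"
  by (simp add: matrix_matrix_mult_def)

lemma matrix_add_rdistrib: "(A + B) ** C = A ** C + B ** (C :: 'a::semiring_1 ^ 'n ^ 'm)"
  by (rule matrix_eqI) (simp add: matrix_mult_nth distrib_right sum.distrib)

lemma smat_nth [simp]: "smat c M $ i $ j = c * M $ i $ j"
  by (simp add: smat_def)

lemma smat_add: "smat c (A + B) = smat c A + smat c B"
  by (rule matrix_eqI) (simp add: distrib_left)

lemma smat_matrix_mult: "smat c M ** N = smat c (M ** N)"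
  by (rule matrix_eqI) (simp add: matrix_mult_nth sum_distrib_left mult.assoc)

lemma matrix_mult_smat: "N ** smat c M = smat c (N ** M)"
  by (rule matrix_eqI) (simp add: matrix_mult_nth sum_distrib_left mult.left_commute)

lemma adj_mat_nth: "adj_mat S $ i $ j = (if (i, j) \<in> S then 1 else 0)"
  by (simp add: adj_mat_def)

lemma adj_mat_mult_nth: "(adj_mat S ** N) $ i $ j = (\<Sum>l\<in>{l. (i, l) \<in> S}. N $ l $ j)"
  unfolding matrix_mult_nth adj_mat_nth
  by (simp add: sum.inter_filter[symmetric] if_distrib[of "\<lambda>c. c * _"] cong: if_cong)

lemma transpose_adj_mat: "transpose (adj_mat S) = adj_mat {(j, i). (i, j) \<in> S}"
  by (rule matrix_eqI) (simp add: transpose_def adj_mat_nth)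

lemma dual_idem_mult_nth:
  "(dual_idem R y a ** N) $ i $ j = (if (y, i) \<in> R a then N $ i $ j else 0)"
proof -
  have "(dual_idem R y a ** N) $ i $ j =
          (\<Sum>k\<in>UNIV. if k = i then (if (y, i) \<in> R a then N $ i $ j else 0) else 0)"
    unfolding matrix_mult_nth by (intro sum.cong) (auto simp: dual_idem_def)
  then show ?thesis by simp
qed

lemma mult_dual_idem_nth:
  "(N ** dual_idem R y a) $ i $ j = (if (y, j) \<in> R a then N $ i $ j else 0)"
proof -
  have "(N ** dual_idem R y a) $ i $ j =
          (\<Sum>k\<in>UNIV. if k = j then (if (y, j) \<in> R a then N $ i $ j else 0) else 0)"
    unfolding matrix_mult_nth by (intro sum.cong) (auto simp: dual_idem_def)
  then show ?thesis by simp
qed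

lemma transpose_dual_idem: "transpose (dual_idem R y a) = dual_idem R y a"
  by (rule matrix_eqI) (auto simp: transpose_def dual_idem_def)

lemma dual_idem_all_ones_dual_idem_nth:
  "(dual_idem R y a ** all_ones ** dual_idem R y b) $ i $ j =
     (if (y, i) \<in> R a \<and> (y, j) \<in> R b then 1 else 0)"
  by (simp add: dual_idem_mult_nth mult_dual_idem_nth all_ones_def)

lemma mat_span_zero: "0 \<in> mat_span Y"
proof -
  have "(\<Sum>B\<in>Y. smat 0 B) = 0" by (rule matrix_eqI) simp
  then show ?thesis unfolding mat_span_def by (intro CollectI exI[of _ "\<lambda>B. 0"]) simp
qed

lemma mat_span_add:
  assumes "M \<in> mat_span Y" "N \<in> mat_span Y"
  shows "M + N \<in> mat_span Y"
proof -
  obtain c c' where "M = (\<Sum>B\<in>Y. smat (c B) B)" "N = (\<Sum>B\<in>Y. smat (c' B) B)"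
    using assms unfolding mat_span_def by blast
  then have "M + N = (\<Sum>B\<in>Y. smat (c B + c' B) B)"
    by (intro matrix_eqI) (simp add: distrib_right sum.distrib)
  then show ?thesis unfolding mat_span_def by (intro CollectI exI[of _ "\<lambda>B. c B + c' B"])
qed

lemma mat_span_sum:
  "finite S \<Longrightarrow> (\<And>s. s \<in> S \<Longrightarrow> f s \<in> mat_span Y) \<Longrightarrow> sum f S \<in> mat_span Y"
  by (induction S rule: finite_induct) (auto intro: mat_span_zero mat_span_add)

lemma smat_in_mat_span:
  assumes "finite Y" "B\<^sub>0 \<in> Y"
  shows "smat k B\<^sub>0 \<in> mat_span Y"
proof -
  have "(\<Sum>B\<in>Y. smat (if B = B\<^sub>0 then k else 0) B) = smat k B\<^sub>0"
    by (rule matrix_eqI) (simp add: if_distrib[of "\<lambda>c. c * _"] assms cong: if_cong)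
  then show ?thesis
    unfolding mat_span_def by (intro CollectI exI[of _ "\<lambda>B. if B = B\<^sub>0 then k else 0"]) simp
qed

lemma gen_alg_sum:
  "finite S \<Longrightarrow> (\<And>s. s \<in> S \<Longrightarrow> f s \<in> gen_alg G) \<Longrightarrow> sum f S \<in> gen_alg G"
  by (induction S rule: finite_induct) (auto intro: gen_alg.zero gen_alg.add)

section \<open>Block-constant matrices\<close>

definition block_const :: "nat \<Rightarrow> (nat \<Rightarrow> ('x::finite \<times> 'x) set) \<Rightarrow> 'x \<Rightarrow> ('a::field ^ 'x ^ 'x) set" where
  "block_const d R x = {N. \<exists>F. \<forall>i j. N $ i $ j = F (rel_index d R x i) (rel_index d R x j)}"

definition thin_points :: "nat \<Rightarrow> (nat \<Rightarrow> ('x::finite \<times> 'x) set) \<Rightarrow> 'x \<Rightarrow> 'x set" where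
  "thin_points d R x = {i. card {l. (x, l) \<in> R (rel_index d R x i)} \<noteq> 2}"

definition thin_vanishing :: "nat \<Rightarrow> (nat \<Rightarrow> ('x::finite \<times> 'x) set) \<Rightarrow> 'x \<Rightarrow> ('a::field ^ 'x ^ 'x) set" where
  "thin_vanishing d R x = {N \<in> block_const d R x.
     \<forall>i\<in>thin_points d R x. \<forall>j\<in>thin_points d R x. N $ i $ j = 0}"

lemma block_const_iff:
  "N \<in> block_const d R x \<longleftrightarrow>
     (\<forall>i j i' j'. rel_index d R x i = rel_index d R x i' \<longrightarrow>
        rel_index d R x j = rel_index d R x j' \<longrightarrow> N $ i $ j = N $ i' $ j')"
proof
  assume "N \<in> block_const d R x"
  then obtain F where "\<And>i j. N $ i $ j = F (rel_index d R x i) (rel_index d R x j)"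
    unfolding block_const_def by blast
  then show "\<forall>i j i' j'. rel_index d R x i = rel_index d R x i' \<longrightarrow>
      rel_index d R x j = rel_index d R x j' \<longrightarrow> N $ i $ j = N $ i' $ j'" by simp
next
  assume N: "\<forall>i j i' j'. rel_index d R x i = rel_index d R x i' \<longrightarrow>
      rel_index d R x j = rel_index d R x j' \<longrightarrow> N $ i $ j = N $ i' $ j'"
  define rep where "rep p = (SOME i. rel_index d R x i = p)" for p
  have "rel_index d R x (rep (rel_index d R x i)) = rel_index d R x i" for i
    unfolding rep_def by (rule someI_ex) blast
  then have "N $ i $ j = N $ rep (rel_index d R x i) $ rep (rel_index d R x j)" for i j
    using N by metis
  then show "N \<in> block_const d R x"
    unfolding block_const_def by (intro CollectI exI[of _ "\<lambda>p q. N $ rep p $ rep q"]) blast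
qed

lemma block_const_mult:
  assumes "M \<in> block_const d R x" "N \<in> block_const d R x"
  shows "M ** N \<in> block_const d R x"
proof -
  obtain F where F: "\<And>i j. M $ i $ j = F (rel_index d R x i) (rel_index d R x j)"
    using assms(1) unfolding block_const_def by blast
  obtain G where G: "\<And>i j. N $ i $ j = G (rel_index d R x i) (rel_index d R x j)"
    using assms(2) unfolding block_const_def by blast
  show ?thesis unfolding block_const_def
    by (intro CollectI exI[of _ "\<lambda>p q. \<Sum>l\<in>UNIV. F p (rel_index d R x l) * G (rel_index d R x l) q"] allI)
       (simp add: matrix_mult_nth F G)
qed

lemma block_const_add:
  assumes "M \<in> block_const d R x" "N \<in> block_const d R x"
  shows "M + N \<in> block_const d R x"
proof -
  obtain F where "\<And>i j. M $ i $ j = F (rel_index d R x i) (rel_index d R x j)"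
    using assms(1) unfolding block_const_def by blast
  moreover obtain G where "\<And>i j. N $ i $ j = G (rel_index d R x i) (rel_index d R x j)"
    using assms(2) unfolding block_const_def by blast
  ultimately show ?thesis
    unfolding block_const_def by (intro CollectI exI[of _ "\<lambda>p q. F p q + G p q"]) simp
qed

lemma block_const_smat:
  assumes "N \<in> block_const d R x"
  shows "smat c N \<in> block_const d R x"
proof -
  obtain F where "\<And>i j. N $ i $ j = F (rel_index d R x i) (rel_index d R x j)"
    using assms unfolding block_const_def by blast
  then show ?thesis
    unfolding block_const_def by (intro CollectI exI[of _ "\<lambda>p q. c * F p q"]) simp
qed

lemma block_const_transpose:
  assumes "N \<in> block_const d R x"
  shows "transpose N \<in> block_const d R x"
proof -
  obtain F where "\<And>i j. N $ i $ j = F (rel_index d R x i) (rel_index d R x j)"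
    using assms unfolding block_const_def by blast
  then show ?thesis
    unfolding block_const_def by (intro CollectI exI[of _ "\<lambda>p q. F q p"]) (simp add: transpose_def)
qed

lemma mem_thin_points_iff:
  assumes "is_scheme d R"
  shows "i \<in> thin_points d R x \<longleftrightarrow> valency d R (rel_index d R x i) \<noteq> 2"
  using valency_eq_card[OF assms rel_index_le[OF assms]] unfolding thin_points_def by simp

lemma thin_subconstituent:
  assumes sch: "is_scheme d R" and qt: "quasi_thin d R" and i: "i \<in> thin_points d R x"
  shows "{l. (x, l) \<in> R (rel_index d R x i)} = {i}"
proof -
  let ?S = "{l. (x, l) \<in> R (rel_index d R x i)}"
  have "i \<in> ?S" using rel_index_mem[OF sch] by blast
  moreover have "card ?S \<le> 2" using card_subconstituent_le_2[OF sch qt rel_index_le[OF sch]] .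
  moreover have "card ?S \<noteq> 2" using i by (simp add: thin_points_def)
  moreover have "card ?S \<noteq> 0" using \<open>i \<in> ?S\<close> by auto
  ultimately have "card ?S = 1" by linarith
  then show ?thesis using \<open>i \<in> ?S\<close> by (metis card_1_singletonE singletonD)
qed

lemma card_nonthin_block_even:
  assumes "is_scheme d R" "a \<le> d"
  shows "even (card {l \<in> UNIV - thin_points d R x. rel_index d R x l = a})"
proof -
  have "{l \<in> UNIV - thin_points d R x. rel_index d R x l = a} =
          (if card {l. (x, l) \<in> R a} = 2 then {l. (x, l) \<in> R a} else {})"
    using mem_rel_iff_rel_index_eq[OF assms, of x] by (auto simp: thin_points_def)
  then show ?thesis by simp
qed

lemma thin_vanishing_block_const: "N \<in> thin_vanishing d R x \<Longrightarrow> N \<in> block_const d R x"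
  unfolding thin_vanishing_def by blast

lemma thin_vanishing_nth:
  "N \<in> thin_vanishing d R x \<Longrightarrow> i \<in> thin_points d R x \<Longrightarrow> j \<in> thin_points d R x \<Longrightarrow> N $ i $ j = 0"
  unfolding thin_vanishing_def by blast

lemma thin_vanishing_zero: "0 \<in> thin_vanishing d R x"
  unfolding thin_vanishing_def block_const_def by (auto intro!: exI[of _ "\<lambda>_ _. 0"])

lemma thin_vanishing_add:
  "M \<in> thin_vanishing d R x \<Longrightarrow> N \<in> thin_vanishing d R x \<Longrightarrow> M + N \<in> thin_vanishing d R x"
  unfolding thin_vanishing_def by (simp add: block_const_add)

lemma thin_vanishing_smat: "N \<in> thin_vanishing d R x \<Longrightarrow> smat c N \<in> thin_vanishing d R x"
  unfolding thin_vanishing_def by (simp add: block_const_smat)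

lemma thin_vanishing_transpose:
  assumes "N \<in> thin_vanishing d R x"
  shows "transpose N \<in> thin_vanishing d R x"
  using block_const_transpose[OF thin_vanishing_block_const[OF assms]] thin_vanishing_nth[OF assms]
  unfolding thin_vanishing_def by (simp add: transpose_def)

lemma thin_vanishing_sum:
  "finite S \<Longrightarrow> (\<And>s. s \<in> S \<Longrightarrow> f s \<in> thin_vanishing d R x) \<Longrightarrow> sum f S \<in> thin_vanishing d R x"
  by (induction S rule: finite_induct) (auto intro: thin_vanishing_zero thin_vanishing_add)

section \<open>The space J1\<close>

definition J1_gens :: "nat \<Rightarrow> (nat \<Rightarrow> ('x::finite \<times> 'x) set) \<Rightarrow> 'x \<Rightarrow> ('a::field ^ 'x ^ 'x) set" where
  "J1_gens d R x = (\<lambda>(a, b). dual_idem R x a ** all_ones ** dual_idem R x b) `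
     {(a, b). a \<le> d \<and> b \<le> d \<and> max (valency d R a) (valency d R b) = 2}"

lemma J1_eq_mat_span: "J1 d R x = mat_span (J1_gens d R x)"
  unfolding J1_def J1_gens_def by (rule arg_cong[of _ _ mat_span]) auto

lemma finite_J1_gens: "finite (J1_gens d R x)"
  unfolding J1_gens_def by (rule finite_imageI, rule finite_subset[of _ "{0..d} \<times> {0..d}"]) auto

lemma J1_gen_nth:
  assumes "is_scheme d R" "a \<le> d" "b \<le> d"
  shows "(dual_idem R x a ** all_ones ** dual_idem R x b :: 'a::field ^ 'x::finite ^ 'x) $ i $ j =
           (if rel_index d R x i = a \<and> rel_index d R x j = b then 1 else 0)"
  by (simp add: dual_idem_all_ones_dual_idem_nth mem_rel_iff_rel_index_eq[OF assms(1)] assms(2,3))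

lemma J1_gens_subset_thin_vanishing:
  assumes sch: "is_scheme d R"
  shows "(J1_gens d R x :: ('a::field ^ 'x::finite ^ 'x) set) \<subseteq> thin_vanishing d R x"
proof
  fix B :: "'a ^ 'x ^ 'x" assume "B \<in> J1_gens d R x"
  then obtain a b where ab: "a \<le> d" "b \<le> d" "max (valency d R a) (valency d R b) = 2"
    and B: "B = dual_idem R x a ** all_ones ** dual_idem R x b"
    unfolding J1_gens_def by auto
  have "B \<in> block_const d R x" unfolding block_const_def B
    by (intro CollectI exI[of _ "\<lambda>p q. if p = a \<and> q = b then 1 else 0"] allI)
       (simp add: J1_gen_nth[OF sch ab(1,2)])
  moreover have "B $ i $ j = 0" if "i \<in> thin_points d R x" "j \<in> thin_points d R x" for i j
    using that ab(3) unfolding B J1_gen_nth[OF sch ab(1,2)] mem_thin_points_iff[OF sch]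
    by (auto simp: max_def split: if_splits)
  ultimately show "B \<in> thin_vanishing d R x" unfolding thin_vanishing_def by blast
qed

lemma thin_vanishing_subset_J1:
  assumes sch: "is_scheme d R" and qt: "quasi_thin d R"
  shows "(thin_vanishing d R x :: ('a::field ^ 'x::finite ^ 'x) set) \<subseteq> J1 d R x"
proof
  let ?r = "rel_index d R x"
  let ?G = "\<lambda>a b. dual_idem R x a ** all_ones ** dual_idem R x b :: 'a ^ 'x ^ 'x"
  let ?P = "{(a, b). a \<le> d \<and> b \<le> d \<and> max (valency d R a) (valency d R b) = 2}"
  have finite_P: "finite ?P" by (rule finite_subset[of _ "{0..d} \<times> {0..d}"]) auto
  fix N :: "'a ^ 'x ^ 'x" assume N: "N \<in> thin_vanishing d R x"
  then obtain F where F: "\<And>i j. N $ i $ j = F (?r i) (?r j)"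
    unfolding thin_vanishing_def block_const_def by blast
  have "N = (\<Sum>(a, b)\<in>?P. smat (F a b) (?G a b))"
  proof (rule matrix_eqI)
    fix i j
    have "(\<Sum>(a, b)\<in>?P. smat (F a b) (?G a b)) $ i $ j =
            (\<Sum>p\<in>?P. if p = (?r i, ?r j) then F (?r i) (?r j) else 0)"
      unfolding sum_component
      by (intro sum.cong refl) (auto simp: J1_gen_nth[OF sch] split: if_splits)
    also have "\<dots> = (if (?r i, ?r j) \<in> ?P then F (?r i) (?r j) else 0)"
      using finite_P by (simp add: sum.delta')
    also have "\<dots> = N $ i $ j"
    proof (cases "(?r i, ?r j) \<in> ?P")
      case False
      have "valency d R (?r i) \<le> 2" "valency d R (?r j) \<le> 2"
        using qt rel_index_le[OF sch] unfolding quasi_thin_def by blast+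
      then have "i \<in> thin_points d R x" "j \<in> thin_points d R x"
        using False rel_index_le[OF sch] by (auto simp: mem_thin_points_iff[OF sch] max_def split: if_splits)
      then have "N $ i $ j = 0" by (rule thin_vanishing_nth[OF N])
      then show ?thesis by (simp only: if_not_P[OF False])
    qed (simp add: F)
    finally show "N $ i $ j = (\<Sum>(a, b)\<in>?P. smat (F a b) (?G a b)) $ i $ j" by simp
  qed
  moreover have "?G a b \<in> J1_gens d R x" if "(a, b) \<in> ?P" for a b
    using that unfolding J1_gens_def by (auto intro!: image_eqI[where x = "(a, b)"])
  ultimately show "N \<in> J1 d R x"
    unfolding J1_eq_mat_span
    by (auto intro!: mat_span_sum finite_P smat_in_mat_span finite_J1_gens)
qed

lemma J1_eq_thin_vanishing:
  assumes "is_scheme d R" "quasi_thin d R"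
  shows "J1 d R x = thin_vanishing d R x"
proof
  show "J1 d R x \<subseteq> thin_vanishing d R x"
    unfolding J1_eq_mat_span mat_span_def
    using J1_gens_subset_thin_vanishing[OF assms(1)] finite_J1_gens
    by (auto intro!: thin_vanishing_sum thin_vanishing_smat)
  show "thin_vanishing d R x \<subseteq> J1 d R x" by (rule thin_vanishing_subset_J1[OF assms])
qed

lemma block_const_mult_nth_char_2:
  assumes sch: "is_scheme d R" and ch: "CHAR('a::field) = 2"
    and M: "M \<in> block_const d R x" and N: "N \<in> block_const d R x"
  shows "(M ** N) $ i $ j = (\<Sum>l\<in>thin_points d R x. M $ i $ l * N $ l $ j :: 'a)"
proof -
  obtain F where F: "\<And>i j. M $ i $ j = F (rel_index d R x i) (rel_index d R x j)"
    using M unfolding block_const_def by blast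
  obtain G where G: "\<And>i j. N $ i $ j = G (rel_index d R x i) (rel_index d R x j)"
    using N unfolding block_const_def by blast
  have "(M ** N) $ i $ j = (\<Sum>l\<in>thin_points d R x. M $ i $ l * N $ l $ j) +
                           (\<Sum>l\<in>UNIV - thin_points d R x. M $ i $ l * N $ l $ j)"
    unfolding matrix_mult_nth
    using sum.subset_diff[of "thin_points d R x" UNIV "\<lambda>l. M $ i $ l * N $ l $ j"]
    by (simp add: add.commute)
  moreover have "(\<Sum>l\<in>UNIV - thin_points d R x. M $ i $ l * N $ l $ j) = 0"
    unfolding F G
    by (rule sum_by_rel_index_even_char_2[OF sch ch,
          where f = "\<lambda>b. F (rel_index d R x i) b * G b (rel_index d R x j)"])
       (rule card_nonthin_block_even[OF sch])
  ultimately show ?thesis by simp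
qed

lemma thin_vanishing_mult_3:
  assumes sch: "is_scheme d R" and ch: "CHAR('a::field) = 2"
    and N1: "N1 \<in> thin_vanishing d R x" and N2: "N2 \<in> thin_vanishing d R x"
    and N3: "N3 \<in> thin_vanishing d R x"
  shows "N1 ** N2 ** N3 = (0 :: 'a ^ 'x ^ 'x)"
proof (rule matrix_eqI)
  note block_const = thin_vanishing_block_const
  fix i j
  have N12_thin_columns: "(N1 ** N2) $ i $ l = 0" if "l \<in> thin_points d R x" for l
    unfolding block_const_mult_nth_char_2[OF sch ch block_const[OF N1] block_const[OF N2]]
    by (intro sum.neutral) (simp add: thin_vanishing_nth[OF N2 _ that])
  show "(N1 ** N2 ** N3) $ i $ j = 0 $ i $ j"
    unfolding block_const_mult_nth_char_2[OF sch ch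
        block_const_mult[OF block_const[OF N1] block_const[OF N2]] block_const[OF N3]]
    by (simp add: N12_thin_columns)
qed

section \<open>Invariance under the Terwilliger algebra\<close>

lemma card_subconstituent_inter_even:
  assumes sch: "is_scheme d R" and g: "g \<le> d" and a: "a \<le> d" and b: "b \<le> d"
    and xg: "{l. (x, l) \<in> R g} = {i}" and xa: "card {l. (x, l) \<in> R a} = 2"
  shows "even (card {l. (x, l) \<in> R a \<and> (i, l) \<in> R b})"
proof -
  have count: "card {m. (x, m) \<in> R g \<and> (m, l) \<in> R b} = (if (i, l) \<in> R b then 1 else 0)" for l
  proof -
    have "{m. (x, m) \<in> R g \<and> (m, l) \<in> R b} = (if (i, l) \<in> R b then {i} else {})" using xg by auto
    then show ?thesis by simp
  qed
  have all_or_none: "(i, l) \<in> R b \<longleftrightarrow> (i, l') \<in> R b" if "(x, l) \<in> R a" "(x, l') \<in> R a" for l l'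
    using intersection_card_eq[OF sch g b a that] count by (auto split: if_splits)
  show ?thesis
  proof (cases "\<exists>l. (x, l) \<in> R a \<and> (i, l) \<in> R b")
    case True
    then have "{l. (x, l) \<in> R a \<and> (i, l) \<in> R b} = {l. (x, l) \<in> R a}" using all_or_none by blast
    then show ?thesis using xa by simp
  next
    case False
    then have "{l. (x, l) \<in> R a \<and> (i, l) \<in> R b} = {}" by blast
    then show ?thesis by (metis card.empty even_zero)
  qed
qed

lemma card_nonthin_neighbours_even:
  assumes sch: "is_scheme d R" and qt: "quasi_thin d R" and i: "i \<in> thin_points d R x"
    and c: "c \<le> d" and a: "a \<le> d"
  shows "even (card {l \<in> {l. (i, l) \<in> R c} - thin_points d R x. rel_index d R x l = a})"
proof (cases "card {l. (x, l) \<in> R a} = 2")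
  case True
  have "{l \<in> {l. (i, l) \<in> R c} - thin_points d R x. rel_index d R x l = a} =
          {l. (x, l) \<in> R a \<and> (i, l) \<in> R c}"
    using mem_rel_iff_rel_index_eq[OF sch a, of x] True by (auto simp: thin_points_def)
  moreover have "even (card {l. (x, l) \<in> R a \<and> (i, l) \<in> R c})"
    using card_subconstituent_inter_even[OF sch rel_index_le[OF sch] a c
        thin_subconstituent[OF sch qt i] True] .
  ultimately show ?thesis by simp
next
  case False
  then have "{l \<in> {l. (i, l) \<in> R c} - thin_points d R x. rel_index d R x l = a} = {}"
    using mem_rel_iff_rel_index_eq[OF sch a, of x] by (auto simp: thin_points_def)
  then show ?thesis by (metis card.empty even_zero)
qed

lemma block_const_adj_mat_mult:
  assumes sch: "is_scheme d R" and c: "c \<le> d" and N: "N \<in> block_const d R x"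
  shows "adj_mat (R c) ** N \<in> block_const d R x"
proof -
  let ?r = "rel_index d R x"
  obtain F where F: "\<And>i j. N $ i $ j = F (?r i) (?r j)" using N unfolding block_const_def by blast
  obtain c' where c': "c' \<le> d" "\<And>u v. (u, v) \<in> R c' \<longleftrightarrow> (v, u) \<in> R c"
    using scheme_converse[OF sch c] by auto
  have card_eq: "card {l \<in> {l. (i, l) \<in> R c}. ?r l = a} = card {l \<in> {l. (i', l) \<in> R c}. ?r l = a}"
    if "?r i = ?r i'" "a \<le> d" for i i' a
  proof -
    have "{l \<in> {l. (i, l) \<in> R c}. ?r l = a} = {l. (x, l) \<in> R a \<and> (l, i) \<in> R c'}" for i
      using mem_rel_iff_rel_index_eq[OF sch \<open>a \<le> d\<close>, of x] c' by auto
    moreover have "(x, i') \<in> R (?r i)" using rel_index_mem[OF sch, of x i'] that(1) by simp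
    ultimately show ?thesis
      using intersection_card_eq[OF sch \<open>a \<le> d\<close> c'(1) rel_index_le[OF sch, of x i]
          rel_index_mem[OF sch, of x i]] by simp
  qed
  show ?thesis unfolding block_const_iff
  proof (intro allI impI)
    fix i j i' j' assume same: "?r i = ?r i'" "?r j = ?r j'"
    show "(adj_mat (R c) ** N) $ i $ j = (adj_mat (R c) ** N) $ i' $ j'"
      unfolding adj_mat_mult_nth F sum_by_rel_index[OF sch, where f = "\<lambda>b. F b _"] same(2)
      by (rule sum.cong[OF refl], subst card_eq[OF same(1)]) auto
  qed
qed

lemma thin_vanishing_adj_mat_mult:
  assumes sch: "is_scheme d R" and qt: "quasi_thin d R" and ch: "CHAR('a::field) = 2"
    and c: "c \<le> d" and N: "N \<in> thin_vanishing d R x"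
  shows "adj_mat (R c) ** N \<in> (thin_vanishing d R x :: ('a ^ 'x ^ 'x) set)"
proof -
  obtain F where F: "\<And>i j. N $ i $ j = F (rel_index d R x i) (rel_index d R x j)"
    using N unfolding thin_vanishing_def block_const_def by blast
  have "(adj_mat (R c) ** N) $ i $ j = 0"
    if i: "i \<in> thin_points d R x" and j: "j \<in> thin_points d R x" for i j
  proof -
    let ?L = "{l. (i, l) \<in> R c}"
    have "(\<Sum>l\<in>?L. N $ l $ j) =
            (\<Sum>l\<in>?L \<inter> thin_points d R x. N $ l $ j) + (\<Sum>l\<in>?L - thin_points d R x. N $ l $ j)"
      by (rule sum.Int_Diff) simp
    moreover have "(\<Sum>l\<in>?L \<inter> thin_points d R x. N $ l $ j) = 0"
      using thin_vanishing_nth[OF N _ j] by (intro sum.neutral) auto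
    moreover have "(\<Sum>l\<in>?L - thin_points d R x. N $ l $ j) = 0"
      unfolding F
      by (rule sum_by_rel_index_even_char_2[OF sch ch]) (rule card_nonthin_neighbours_even[OF sch qt i c])
    ultimately show ?thesis by (simp add: adj_mat_mult_nth)
  qed
  then show ?thesis
    using block_const_adj_mat_mult[OF sch c thin_vanishing_block_const[OF N]]
    unfolding thin_vanishing_def by blast
qed

lemma thin_vanishing_dual_idem_mult:
  assumes sch: "is_scheme d R" and a: "a \<le> d" and N: "N \<in> thin_vanishing d R x"
  shows "dual_idem R x a ** N \<in> thin_vanishing d R x"
proof -
  obtain F where F: "\<And>i j. N $ i $ j = F (rel_index d R x i) (rel_index d R x j)"
    using N unfolding thin_vanishing_def block_const_def by blast
  have "dual_idem R x a ** N \<in> block_const d R x" unfolding block_const_def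
    by (intro CollectI exI[of _ "\<lambda>p q. if p = a then F p q else 0"] allI)
       (simp add: dual_idem_mult_nth F mem_rel_iff_rel_index_eq[OF sch a])
  then show ?thesis using thin_vanishing_nth[OF N]
    unfolding thin_vanishing_def by (simp add: dual_idem_mult_nth)
qed

abbreviation terwilliger_gens :: "nat \<Rightarrow> (nat \<Rightarrow> ('x::finite \<times> 'x) set) \<Rightarrow> 'x \<Rightarrow> ('a::field ^ 'x ^ 'x) set" where
  "terwilliger_gens d R x \<equiv> (\<lambda>a. adj_mat (R a)) ` {0..d} \<union> dual_idem R x ` {0..d}"

lemma transpose_terwilliger_gen:
  assumes sch: "is_scheme d R" and M: "M \<in> terwilliger_gens d R x"
  shows "transpose M \<in> terwilliger_gens d R x"
proof (cases "M \<in> dual_idem R x ` {0..d}")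
  case False
  then obtain c where c: "c \<le> d" "M = adj_mat (R c)" using M by auto
  obtain c' where "c' \<le> d" "R c' = {(f, e). (e, f) \<in> R c}"
    using scheme_converse[OF sch c(1)] by blast
  then have "transpose M = adj_mat (R c')" "c' \<le> d" unfolding c(2) transpose_adj_mat by simp_all
  then show ?thesis by auto
qed (auto simp: transpose_dual_idem)

lemma thin_vanishing_terwilliger_ideal:
  assumes sch: "is_scheme d R" and qt: "quasi_thin d R" and ch: "CHAR('a::field) = 2"
    and M: "M \<in> (terwilliger d R x :: ('a ^ 'x ^ 'x) set)"
  shows "\<forall>N\<in>thin_vanishing d R x. M ** N \<in> thin_vanishing d R x \<and> N ** M \<in> thin_vanishing d R x"
  using M unfolding terwilliger_def
proof (induction M rule: gen_alg.induct)
  case (gen M)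
  have left: "M' ** N \<in> thin_vanishing d R x"
    if "M' \<in> terwilliger_gens d R x" "N \<in> thin_vanishing d R x" for M' N :: "'a ^ 'x ^ 'x"
    using that thin_vanishing_adj_mat_mult[OF sch qt ch] thin_vanishing_dual_idem_mult[OF sch] by auto
  have "N ** M \<in> thin_vanishing d R x" if N: "N \<in> thin_vanishing d R x" for N
  proof -
    have "transpose M ** transpose N \<in> thin_vanishing d R x"
      by (rule left[OF transpose_terwilliger_gen[OF sch gen] thin_vanishing_transpose[OF N]])
    then show ?thesis using thin_vanishing_transpose by (fastforce simp: matrix_transpose_mul)
  qed
  then show ?case using left[OF gen] by blast
next
  case zero
  then show ?case using thin_vanishing_zero by auto
next
  case (add M N)
  then show ?case by (auto simp: matrix_add_ldistrib matrix_add_rdistrib intro: thin_vanishing_add)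
next
  case (smul M c)
  then show ?case by (auto simp: smat_matrix_mult matrix_mult_smat intro: thin_vanishing_smat)
next
  case (mult M N)
  then show ?case by (metis matrix_mul_assoc)
qed

lemma all_ones_in_terwilliger:
  assumes sch: "is_scheme d R"
  shows "(all_ones :: 'a::field ^ 'x::finite ^ 'x) \<in> terwilliger d R x"
proof -
  have "(all_ones :: 'a ^ 'x ^ 'x) = (\<Sum>c\<in>{0..d}. adj_mat (R c))"
  proof (rule matrix_eqI)
    fix i j :: 'x
    obtain c\<^sub>0 where c\<^sub>0: "c\<^sub>0 \<le> d" "(i, j) \<in> R c\<^sub>0"
      using scheme_covers[OF sch] by (metis UNIV_I UN_iff atLeastAtMost_iff)
    have "(i, j) \<in> R c \<longleftrightarrow> c = c\<^sub>0" if "c \<le> d" for c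
      using scheme_disjoint[OF sch] c\<^sub>0 that by blast
    then have "(\<Sum>c\<in>{0..d}. adj_mat (R c) $ i $ j) = (\<Sum>c\<in>{0..d}. if c = c\<^sub>0 then (1::'a) else 0)"
      by (intro sum.cong refl) (auto simp: adj_mat_nth)
    also have "\<dots> = 1" using c\<^sub>0 by simp
    finally show "(all_ones :: 'a ^ 'x ^ 'x) $ i $ j = (\<Sum>c\<in>{0..d}. adj_mat (R c)) $ i $ j"
      by (simp add: all_ones_def)
  qed
  also have "\<dots> \<in> terwilliger d R x" unfolding terwilliger_def
    by (intro gen_alg_sum) (auto intro: gen_alg.gen)
  finally show ?thesis .
qed

lemma mat_1_in_terwilliger:
  assumes "is_scheme d R"
  shows "(mat 1 :: 'a::field ^ 'x::finite ^ 'x) \<in> terwilliger d R x"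
proof -
  have "(mat 1 :: 'a ^ 'x ^ 'x) = adj_mat (R 0)"
    by (rule matrix_eqI) (simp add: adj_mat_nth scheme_diagonal[OF assms] mat_def)
  then show ?thesis unfolding terwilliger_def by (auto intro: gen_alg.gen)
qed

lemma J1_subset_terwilliger:
  assumes sch: "is_scheme d R"
  shows "(J1 d R x :: ('a::field ^ 'x::finite ^ 'x) set) \<subseteq> terwilliger d R x"
proof
  have ones: "all_ones \<in> (terwilliger d R x :: ('a ^ 'x ^ 'x) set)"
    by (rule all_ones_in_terwilliger[OF sch])
  have gens: "B \<in> terwilliger d R x" if B: "B \<in> (J1_gens d R x :: ('a ^ 'x ^ 'x) set)" for B
  proof -
    obtain a b where ab: "a \<le> d" "b \<le> d"
      and B_eq: "B = dual_idem R x a ** all_ones ** dual_idem R x b"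
      using B unfolding J1_gens_def by auto
    have "dual_idem R x a \<in> (terwilliger d R x :: ('a ^ 'x ^ 'x) set)"
      and "dual_idem R x b \<in> (terwilliger d R x :: ('a ^ 'x ^ 'x) set)"
      using ab unfolding terwilliger_def by (auto intro: gen_alg.gen)
    then show ?thesis using ones unfolding B_eq terwilliger_def by (intro gen_alg.mult)
  qed
  fix M :: "'a ^ 'x ^ 'x" assume "M \<in> J1 d R x"
  then obtain c where "M = (\<Sum>B\<in>J1_gens d R x. smat (c B) B)"
    unfolding J1_eq_mat_span mat_span_def by blast
  also have "\<dots> \<in> terwilliger d R x"
    using gens unfolding terwilliger_def by (intro gen_alg_sum finite_J1_gens gen_alg.smul) auto
  finally show "M \<in> terwilliger d R x" .
qed

section \<open>Nil left ideals\<close>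

lemma
  assumes "left_ideal T I"
  shows left_ideal_subset: "I \<subseteq> T" and left_ideal_zero: "0 \<in> I"
    and left_ideal_add: "M \<in> I \<Longrightarrow> N \<in> I \<Longrightarrow> M + N \<in> I"
    and left_ideal_smat: "M \<in> I \<Longrightarrow> smat c M \<in> I"
    and left_ideal_mult: "M \<in> T \<Longrightarrow> N \<in> I \<Longrightarrow> M ** N \<in> I"
  using assms unfolding left_ideal_def is_subspace_in_def by simp_all

lemma left_ideal_sum:
  assumes L: "left_ideal T L" and J: "left_ideal T J"
    and T_add: "\<And>M N. M \<in> T \<Longrightarrow> N \<in> T \<Longrightarrow> M + N \<in> T"
  shows "left_ideal T {l + n | l n. l \<in> L \<and> n \<in> J}" (is "left_ideal T ?S")
  unfolding left_ideal_def is_subspace_in_def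
proof (intro conjI ballI allI)
  show "?S \<subseteq> T" using left_ideal_subset[OF L] left_ideal_subset[OF J] by (auto intro: T_add)
  show "0 \<in> ?S" using left_ideal_zero[OF L] left_ideal_zero[OF J] by force
  fix M N assume "M \<in> ?S" "N \<in> ?S"
  then obtain l n l' n' where "M = l + n" "N = l' + n'" "l \<in> L" "n \<in> J" "l' \<in> L" "n' \<in> J"
    by blast
  moreover have "l + n + (l' + n') = (l + l') + (n + n')" by (simp add: algebra_simps)
  ultimately show "M + N \<in> ?S" using left_ideal_add[OF L] left_ideal_add[OF J] by blast
next
  fix c M assume "M \<in> ?S"
  then obtain l n where "M = l + n" "l \<in> L" "n \<in> J" by blast
  then show "smat c M \<in> ?S" using left_ideal_smat[OF L] left_ideal_smat[OF J] smat_add by blast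
next
  fix M N assume "M \<in> T" "N \<in> ?S"
  then obtain l n where "N = l + n" "l \<in> L" "n \<in> J" by blast
  then show "M ** N \<in> ?S"
    using left_ideal_mult[OF L \<open>M \<in> T\<close>] left_ideal_mult[OF J \<open>M \<in> T\<close>] matrix_add_ldistrib by blast
qed

lemma left_ideal_eq_if_mat_1_mem:
  assumes "left_ideal T L" "mat 1 \<in> L"
  shows "L = T"
proof
  show "L \<subseteq> T" by (rule left_ideal_subset[OF assms(1)])
  show "T \<subseteq> L"
  proof
    fix M assume "M \<in> T"
    then have "M ** mat 1 \<in> L" by (rule left_ideal_mult[OF assms(1) _ assms(2)])
    then show "M \<in> L" by simp
  qed
qed

lemma unipotent_left_inverse:
  fixes l n :: "'a::field ^ 'n::finite ^ 'n"
  assumes "mat 1 = l + n" "n ** n ** n = 0"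
  shows "(mat 1 + n + n ** n) ** l = mat 1"
proof -
  let ?q = "mat 1 + n + n ** n"
  have "?q ** l + ?q ** n = ?q" by (metis assms(1) matrix_add_ldistrib matrix_mul_rid)
  moreover have "?q ** n = n + n ** n" using assms(2) by (simp add: matrix_add_rdistrib)
  ultimately show ?thesis by (simp add: algebra_simps)
qed

lemma nil_left_ideal_subset_maximal_left_ideal:
  assumes J: "left_ideal T J" and T_1: "mat 1 \<in> T"
    and T_add: "\<And>M N. M \<in> T \<Longrightarrow> N \<in> T \<Longrightarrow> M + N \<in> T"
    and T_mult: "\<And>M N. M \<in> T \<Longrightarrow> N \<in> T \<Longrightarrow> M ** N \<in> T"
    and nil: "\<And>N. N \<in> J \<Longrightarrow> N ** N ** N = 0"
    and L: "maximal_left_ideal T L"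
  shows "J \<subseteq> L"
proof -
  let ?S = "{l + n | l n. l \<in> L \<and> n \<in> J}"
  have L_ideal: "left_ideal T L" and "L \<noteq> T"
    and maximal: "\<And>L'. left_ideal T L' \<Longrightarrow> L \<subseteq> L' \<Longrightarrow> L' = L \<or> L' = T"
    using L unfolding maximal_left_ideal_def by blast+
  have "0 \<in> L" "0 \<in> J" using left_ideal_zero L_ideal J by blast+
  then have "L \<subseteq> ?S" "J \<subseteq> ?S" by force+
  have "?S \<noteq> T"
  proof
    assume "?S = T"
    then obtain l n where ln: "mat 1 = l + n" "l \<in> L" "n \<in> J" using T_1 by blast
    have "n \<in> T" using left_ideal_subset[OF J] ln(3) by blast
    then have "mat 1 + n + n ** n \<in> T" using T_1 T_add T_mult by blast
    then have "(mat 1 + n + n ** n) ** l \<in> L" by (rule left_ideal_mult[OF L_ideal _ ln(2)])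
    then have "mat 1 \<in> L" by (simp only: unipotent_left_inverse[OF ln(1) nil[OF ln(3)]])
    then show False using left_ideal_eq_if_mat_1_mem[OF L_ideal] \<open>L \<noteq> T\<close> by blast
  qed
  then have "?S = L" using maximal[OF left_ideal_sum[OF L_ideal J T_add] \<open>L \<subseteq> ?S\<close>] by blast
  then show ?thesis using \<open>J \<subseteq> ?S\<close> by blast
qed

lemma nilpotent_ideal_if_mult_3_eq_0:
  assumes "\<And>A B C. A \<in> I \<Longrightarrow> B \<in> I \<Longrightarrow> C \<in> I \<Longrightarrow> A ** B ** C = 0"
  shows "nilpotent_ideal I"
  unfolding nilpotent_ideal_def
proof (intro exI[of _ 3] conjI allI impI)
  fix Ns :: "('a ^ 'b ^ 'b) list" assume "length Ns = 3" "set Ns \<subseteq> I"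
  then obtain A B C where "Ns = [A, B, C]" "A \<in> I" "B \<in> I" "C \<in> I"
    by (auto simp: numeral_3_eq_3 length_Suc_conv)
  then show "foldr (\<lambda>A B. A ** B) Ns (mat 1) = 0"
    using assms by (simp add: matrix_mul_assoc)
qed simp

theorem corollary6p7:
  fixes d :: nat and R :: "nat \<Rightarrow> ('x::finite \<times> 'x) set" and x :: 'x
  assumes "CHAR('a::field) = 2"
    and "is_scheme d R"
    and "quasi_thin d R"
  shows "(\<forall>M\<in>(terwilliger d R x :: ('a ^ 'x ^ 'x) set). \<forall>N\<in>J1 d R x.
            M ** N \<in> J1 d R x \<and> N ** M \<in> J1 d R x)
       \<and> (\<forall>N\<in>(J1 d R x :: ('a ^ 'x ^ 'x) set). N ** N ** N = 0)
       \<and> two_sided_ideal (terwilliger d R x) (J1 d R x :: ('a ^ 'x ^ 'x) set)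
       \<and> nilpotent_ideal (J1 d R x :: ('a ^ 'x ^ 'x) set)
       \<and> (J1 d R x :: ('a ^ 'x ^ 'x) set) \<subseteq> jacobson_radical (terwilliger d R x)"
proof -
  note ch = assms(1) and sch = assms(2) and qt = assms(3)
  let ?T = "terwilliger d R x :: ('a ^ 'x ^ 'x) set"
  let ?J = "J1 d R x :: ('a ^ 'x ^ 'x) set"
  have J_eq: "?J = thin_vanishing d R x" by (rule J1_eq_thin_vanishing[OF sch qt])
  have ideal: "\<forall>M\<in>?T. \<forall>N\<in>?J. M ** N \<in> ?J \<and> N ** M \<in> ?J"
    unfolding J_eq using thin_vanishing_terwilliger_ideal[OF sch qt ch] by blast
  have mult_3: "A ** B ** C = 0" if "A \<in> ?J" "B \<in> ?J" "C \<in> ?J" for A B C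
    using that thin_vanishing_mult_3[OF sch ch] unfolding J_eq by blast
  have J_T: "?J \<subseteq> ?T" by (rule J1_subset_terwilliger[OF sch])
  have subspace: "is_subspace_in ?T ?J"
    using J_T unfolding is_subspace_in_def J_eq
    by (auto intro: thin_vanishing_zero thin_vanishing_add thin_vanishing_smat)
  have "?J \<subseteq> L" if "maximal_left_ideal ?T L" for L
    using subspace ideal mat_1_in_terwilliger[OF sch] mult_3 that
    by (intro nil_left_ideal_subset_maximal_left_ideal)
       (auto simp: left_ideal_def terwilliger_def intro: gen_alg.add gen_alg.mult)
  then have "?J \<subseteq> jacobson_radical ?T"
    unfolding jacobson_radical_def using J_T by blast
  then show ?thesis
    using ideal mult_3 subspace nilpotent_ideal_if_mult_3_eq_0[of ?J, OF mult_3]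
    unfolding two_sided_ideal_def by blast
qed

end
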